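(* Let $n\ge 3$, let $H_0$ be the cyclic subgroup of $\operatorname{Sym}_n$ generated by $(1,2,\dots,n)$, and let $H$ be a subgroup of $\operatorname{Sym}_n$ with $H_0\subseteq H$. Then $G_n(H)\cong F\times\mathbb{Z}$, where the factor $\mathbb{Z}$ is generated by the (central) image of $z=a_1a_2\cdots a_n$, and $F$ is the group with generators $a_2,\dots,a_n$ and defining relations $$a_2a_3\cdots a_n=a_{\tau(k+1)}\cdots a_{\tau(n)}\,a_{\tau(1)}\cdots a_{\tau(k-1)}$$ for all $\tau\in H$, where $k=\tau^{-1}(1)$.
   Context: For $n\ge 3$ and a subset $H\subseteq\operatorname{Sym}_n$, $G_n(H)$ denotes the group with generators $a_1,\dots,a_n$ and defining relations $a_1a_2\cdots a_n=a_{\sigma(1)}a_{\sigma(2)}\cdots a_{\sigma(n)}$ for all $\sigma\in H$. *)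

theory Defs
  imports "HOL-Algebra.Sym_Groups" "HOL-Algebra.Elementary_Groups" "HOL-Algebra.Generated_Groups"
begin

text \<open>A letter is a generator together with a sign (True = the generator, False = its inverse).
  A word is a list of letters.\<close>

type_synonym 'a word = "('a \<times> bool) list"

definition letter_inv :: "'a \<times> bool \<Rightarrow> 'a \<times> bool" where
  "letter_inv x = (fst x, \<not> snd x)"

inductive pres_eq :: "('a word \<times> 'a word) set \<Rightarrow> 'a word \<Rightarrow> 'a word \<Rightarrow> bool"
  for R where
  refl: "pres_eq R w w"
| sym: "pres_eq R u v \<Longrightarrow> pres_eq R v u"
| trans: "pres_eq R u v \<Longrightarrow> pres_eq R v w \<Longrightarrow> pres_eq R u w"
| cancel: "pres_eq R [x, letter_inv x] []"
| rel: "(u, v) \<in> R \<Longrightarrow> pres_eq R u v"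
| ctxt: "pres_eq R u v \<Longrightarrow> pres_eq R (p @ u @ q) (p @ v @ q)"

definition words_over :: "'a set \<Rightarrow> 'a word set" where
  "words_over S = {w. set (map fst w) \<subseteq> S}"

definition pres_class :: "'a set \<Rightarrow> ('a word \<times> 'a word) set \<Rightarrow> 'a word \<Rightarrow> 'a word set" where
  "pres_class S R w = {v \<in> words_over S. pres_eq R w v}"

definition presented_group :: "'a set \<Rightarrow> ('a word \<times> 'a word) set \<Rightarrow> 'a word set monoid" where
  "presented_group S R =
     \<lparr> carrier = pres_class S R ` words_over S,
       monoid.mult = (\<lambda>A B. {w. \<exists>u\<in>A. \<exists>v\<in>B. w \<in> pres_class S R (u @ v)}),
       one = pres_class S R [] \<rparr>"

definition pos_word :: "nat list \<Rightarrow> nat word" where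
  "pos_word is = map (\<lambda>i. (i, True)) is"

definition n_cycle :: "nat \<Rightarrow> nat \<Rightarrow> nat" where
  "n_cycle n = (\<lambda>i. if 1 \<le> i \<and> i < n then i + 1 else if i = n then 1 else i)"

definition G_rels :: "nat \<Rightarrow> (nat \<Rightarrow> nat) set \<Rightarrow> (nat word \<times> nat word) set" where
  "G_rels n H = {(pos_word [1..<n+1], pos_word (map \<sigma> [1..<n+1])) | \<sigma>. \<sigma> \<in> H}"

definition G_n :: "nat \<Rightarrow> (nat \<Rightarrow> nat) set \<Rightarrow> nat word set monoid" where
  "G_n n H = presented_group {1..n} (G_rels n H)"

definition F_rels :: "nat \<Rightarrow> (nat \<Rightarrow> nat) set \<Rightarrow> (nat word \<times> nat word) set" where
  "F_rels n H = {(pos_word [2..<n+1],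
                  pos_word (map \<tau> ([inv_into {1..n} \<tau> 1 + 1..<n+1] @ [1..<inv_into {1..n} \<tau> 1])))
                 | \<tau>. \<tau> \<in> H}"

definition F_n :: "nat \<Rightarrow> (nat \<Rightarrow> nat) set \<Rightarrow> nat word set monoid" where
  "F_n n H = presented_group {2..n} (F_rels n H)"

end

theory Submission
  imports Defs
begin

text \<open>
  Let \<open>z = a\<^sub>1 a\<^sub>2 \<cdots> a\<^sub>n\<close> and \<open>w = a\<^sub>2 \<cdots> a\<^sub>n\<close>.  Because \<open>H\<close> contains the powers of the
  \<open>n\<close>-cycle, \<open>z\<close> equals each of its cyclic rotations in \<open>G\<^sub>n(H)\<close>; this makes \<open>z\<close> central, gives
  \<open>a\<^sub>1 = w\<inverse> z\<close>, and shows that the relations of \<open>F\<close> hold in \<open>G\<^sub>n(H)\<close>.  Hence every word \<open>u\<close> is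
  equal to \<open>\<theta>(u) z\<^sup>e\<^sup>(\<^sup>u\<^sup>)\<close>, where \<open>\<theta>\<close> substitutes \<open>w\<inverse>\<close> for \<open>a\<^sub>1\<close> and \<open>e(u)\<close> is the exponent sum
  of \<open>a\<^sub>1\<close> in \<open>u\<close>.  Conversely \<open>\<theta>\<close> maps the relations of \<open>G\<^sub>n(H)\<close> to consequences of those of
  \<open>F\<close>, and \<open>e\<close> is invariant.  So \<open>u \<mapsto> (\<theta>(u), e(u))\<close> is a well-defined, injective, surjective
  homomorphism \<open>G\<^sub>n(H) \<rightarrow> F \<times> \<int>\<close> sending \<open>z\<close> to \<open>(1, 1)\<close>.
\<close>

section \<open>Calculus of words in a presented group\<close>

definition invw :: "'a word \<Rightarrow> 'a word" where
  "invw xs = rev (map letter_inv xs)"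

lemma letter_inv_inv [simp]: "letter_inv (letter_inv x) = x"
  by (simp add: letter_inv_def)

lemma invw_simps [simp]:
  "invw [] = []" "invw (x # xs) = invw xs @ [letter_inv x]"
  "invw (xs @ ys) = invw ys @ invw xs" "invw (invw xs) = xs"
  by (simp_all add: invw_def rev_map comp_def)

lemmas pres_eq_trans [trans] = pres_eq.trans

lemma pres_eq_append:
  assumes "pres_eq R u u'" and "pres_eq R v v'"
  shows "pres_eq R (u @ v) (u' @ v')"
proof -
  have "pres_eq R (u @ v) (u' @ v)" using pres_eq.ctxt[OF assms(1), of "[]" v] by simp
  also have "pres_eq R (u' @ v) (u' @ v')" using pres_eq.ctxt[OF assms(2), of u' "[]"] by simp
  finally show ?thesis .
qed

lemma pres_eq_left_mult: "pres_eq R u v \<Longrightarrow> pres_eq R (p @ u) (p @ v)"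
  by (rule pres_eq_append[OF pres_eq.refl])

lemma pres_eq_right_mult: "pres_eq R u v \<Longrightarrow> pres_eq R (u @ q) (v @ q)"
  by (rule pres_eq_append[OF _ pres_eq.refl])

lemma pres_eq_inv_right: "pres_eq R (xs @ invw xs) []"
proof (induction xs)
  case Nil
  show ?case by (simp add: pres_eq.refl)
next
  case (Cons x xs)
  have "pres_eq R ([x] @ (xs @ invw xs) @ [letter_inv x]) ([x] @ [] @ [letter_inv x])"
    by (rule pres_eq.ctxt[OF Cons])
  also have "pres_eq R ([x] @ [] @ [letter_inv x]) []"
    by (simp add: pres_eq.cancel)
  finally show ?case by simp
qed

lemma pres_eq_inv_left: "pres_eq R (invw xs @ xs) []"
  using pres_eq_inv_right[of R "invw xs"] by simp

lemma pres_eq_cancel_left: "pres_eq R (invw p @ p @ u) u"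
  using pres_eq_append[OF pres_eq_inv_left pres_eq.refl, of R p u] by simp

lemma pres_eq_cancel_left': "pres_eq R (p @ invw p @ u) u"
  using pres_eq_cancel_left[of R "invw p" u] by simp

lemma pres_eq_cancel_right: "pres_eq R (u @ p @ invw p) u"
  using pres_eq_append[OF pres_eq.refl pres_eq_inv_right, of R u p] by simp

lemma pres_eq_cancel_right': "pres_eq R (u @ invw p @ p) u"
  using pres_eq_cancel_right[of R u "invw p"] by simp

lemma pres_eq_cancel_prefix:
  assumes "pres_eq R (p @ u) (p @ v)"
  shows "pres_eq R u v"
proof -
  have "pres_eq R u (invw p @ p @ u)" by (rule pres_eq.sym[OF pres_eq_cancel_left])
  also have "pres_eq R (invw p @ p @ u) (invw p @ p @ v)"
    using pres_eq_left_mult[OF assms, of "invw p"] by simp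
  also have "pres_eq R (invw p @ p @ v) v" by (rule pres_eq_cancel_left)
  finally show ?thesis .
qed

lemma pres_eq_trivial_rotate:
  assumes "pres_eq R (p @ q) []"
  shows "pres_eq R (q @ p) []"
proof -
  have "pres_eq R (q @ p) (invw p @ (p @ q) @ p)"
    using pres_eq.sym[OF pres_eq_cancel_left[of R p "q @ p"]] by simp
  also have "pres_eq R (invw p @ (p @ q) @ p) (invw p @ [] @ p)"
    by (rule pres_eq.ctxt[OF assms])
  also have "pres_eq R (invw p @ [] @ p) []" by (simp add: pres_eq_inv_left)
  finally show ?thesis .
qed

lemma pres_eq_commute_inv:
  assumes "pres_eq R (z @ y) (y @ z)"
  shows "pres_eq R (invw z @ y) (y @ invw z)"
proof -
  have "pres_eq R (invw z @ y) (invw z @ y @ z @ invw z)"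
    using pres_eq.sym[OF pres_eq_cancel_right[of R "invw z @ y" z]] by simp
  also have "pres_eq R (invw z @ y @ z @ invw z) (invw z @ z @ y @ invw z)"
    using pres_eq.ctxt[OF pres_eq.sym[OF assms], of "invw z" "invw z"] by simp
  also have "pres_eq R (invw z @ z @ y @ invw z) (y @ invw z)"
    by (rule pres_eq_cancel_left)
  finally show ?thesis .
qed

lemma pres_eq_commute_append:
  assumes "pres_eq R (z @ y) (y @ z)" and "pres_eq R (z @ y') (y' @ z)"
  shows "pres_eq R (z @ y @ y') ((y @ y') @ z)"
proof -
  have "pres_eq R (z @ y @ y') (y @ z @ y')"
    using pres_eq_right_mult[OF assms(1), of y'] by simp
  also have "pres_eq R (y @ z @ y') (y @ y' @ z)"
    by (rule pres_eq_left_mult[OF assms(2)])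
  finally show ?thesis by simp
qed

lemma pres_eq_rotate_central:
  assumes "pres_eq R z (p @ q)" and "pres_eq R (z @ p) (p @ z)"
  shows "pres_eq R z (q @ p)"
proof -
  have "pres_eq R z (invw p @ p @ z)" by (rule pres_eq.sym[OF pres_eq_cancel_left])
  also have "pres_eq R (invw p @ p @ z) (invw p @ z @ p)"
    using pres_eq_left_mult[OF pres_eq.sym[OF assms(2)], of "invw p"] by simp
  also have "pres_eq R (invw p @ z @ p) (invw p @ p @ q @ p)"
    using pres_eq.ctxt[OF assms(1), of "invw p" p] by simp
  also have "pres_eq R (invw p @ p @ q @ p) (q @ p)" by (rule pres_eq_cancel_left)
  finally show ?thesis .
qed

lemma words_over_simps [simp]:
  "[] \<in> words_over S"
  "(x # u) \<in> words_over S \<longleftrightarrow> fst x \<in> S \<and> u \<in> words_over S"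
  "(u @ v) \<in> words_over S \<longleftrightarrow> u \<in> words_over S \<and> v \<in> words_over S"
  by (auto simp: words_over_def)

lemma invw_words_over [simp]: "invw u \<in> words_over S \<longleftrightarrow> u \<in> words_over S"
  by (induction u) (auto simp: letter_inv_def)

lemma words_over_mono: "u \<in> words_over A \<Longrightarrow> A \<subseteq> B \<Longrightarrow> u \<in> words_over B"
  by (auto simp: words_over_def)

lemma pres_class_eq:
  assumes "pres_eq R u v"
  shows "pres_class S R u = pres_class S R v"
  using pres_eq.trans[OF pres_eq.sym[OF assms]] pres_eq.trans[OF assms]
  unfolding pres_class_def by blast

lemma pres_class_eqD:
  "v \<in> words_over S \<Longrightarrow> pres_class S R u = pres_class S R v \<Longrightarrow> pres_eq R u v"
  unfolding pres_class_def using pres_eq.refl by blast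

lemma carrier_presented_group:
  "carrier (presented_group S R) = pres_class S R ` words_over S"
  by (simp add: presented_group_def)

lemma presented_group_mult_class:
  assumes "a \<in> words_over S" "b \<in> words_over S"
  shows "pres_class S R a \<otimes>\<^bsub>presented_group S R\<^esub> pres_class S R b = pres_class S R (a @ b)"
    (is "?L = ?R")
proof (intro equalityI subsetI)
  fix x assume "x \<in> ?L"
  then obtain u v where "u \<in> pres_class S R a" "v \<in> pres_class S R b"
      and x: "x \<in> pres_class S R (u @ v)"
    unfolding presented_group_def by auto
  then have "pres_eq R (a @ b) (u @ v)"
    by (intro pres_eq_append) (simp_all add: pres_class_def)
  with x show "x \<in> ?R" using pres_class_eq[of R "a @ b" "u @ v" S] by simp
next
  fix x assume "x \<in> ?R"
  moreover have "a \<in> pres_class S R a" "b \<in> pres_class S R b"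
    using assms by (auto simp: pres_class_def intro: pres_eq.refl)
  ultimately show "x \<in> ?L" unfolding presented_group_def by auto
qed

definition induced_map :: "('a word \<Rightarrow> 'c) \<Rightarrow> 'a word set \<Rightarrow> 'c" where
  "induced_map F A = F (SOME u. u \<in> A)"

lemma induced_map_class:
  assumes resp: "\<And>u v. u \<in> words_over S \<Longrightarrow> v \<in> words_over S \<Longrightarrow> pres_eq R u v \<Longrightarrow> F u = F v"
    and a: "a \<in> words_over S"
  shows "induced_map F (pres_class S R a) = F a"
proof -
  have "a \<in> pres_class S R a" using a by (simp add: pres_class_def pres_eq.refl)
  then have "(SOME u. u \<in> pres_class S R a) \<in> pres_class S R a" by (rule someI)
  then have "F a = F (SOME u. u \<in> pres_class S R a)"
    using resp[OF a] by (simp add: pres_class_def)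
  then show ?thesis by (simp add: induced_map_def)
qed

lemma presented_group_iso:
  assumes resp: "\<And>u v. u \<in> words_over S \<Longrightarrow> v \<in> words_over S \<Longrightarrow> pres_eq R u v \<Longrightarrow> F u = F v"
    and faithful: "\<And>u v. u \<in> words_over S \<Longrightarrow> v \<in> words_over S \<Longrightarrow> F u = F v \<Longrightarrow> pres_eq R u v"
    and mult: "\<And>u v. u \<in> words_over S \<Longrightarrow> v \<in> words_over S \<Longrightarrow> F (u @ v) = F u \<otimes>\<^bsub>K\<^esub> F v"
    and onto: "F ` words_over S = carrier K"
  shows "induced_map F \<in> iso (presented_group S R) K"
proof -
  note cls = induced_map_class[OF resp]
  have carr: "induced_map F \<in> carrier (presented_group S R) \<rightarrow> carrier K"
    using onto by (auto simp: carrier_presented_group cls)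
  have hom: "induced_map F (A \<otimes>\<^bsub>presented_group S R\<^esub> B)
               = induced_map F A \<otimes>\<^bsub>K\<^esub> induced_map F B"
    if "A \<in> carrier (presented_group S R)" "B \<in> carrier (presented_group S R)" for A B
    using that by (auto simp: carrier_presented_group presented_group_mult_class cls mult)
  have inj: "inj_on (induced_map F) (carrier (presented_group S R))"
  proof (rule inj_onI)
    fix A B
    assume "A \<in> carrier (presented_group S R)" "B \<in> carrier (presented_group S R)"
      and "induced_map F A = induced_map F B"
    then obtain a b where "a \<in> words_over S" "b \<in> words_over S" "F a = F b"
        and "A = pres_class S R a" "B = pres_class S R b"
      by (auto simp: carrier_presented_group cls)
    then show "A = B" by (simp add: pres_class_eq faithful)
  qed
  have "induced_map F ` carrier (presented_group S R) = carrier K"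
    using onto by (auto simp: carrier_presented_group cls image_image)
  with carr hom inj show ?thesis
    unfolding iso_def hom_def bij_betw_def by auto
qed

lemma pres_eq_mono_rels:
  assumes "pres_eq R u v" and "\<And>a b. (a, b) \<in> R \<Longrightarrow> pres_eq R' a b"
  shows "pres_eq R' u v"
  using assms(1) by (induction rule: pres_eq.induct) (auto intro: pres_eq.intros assms(2))

definition word_subst :: "('a \<times> bool \<Rightarrow> 'b word) \<Rightarrow> 'a word \<Rightarrow> 'b word" where
  "word_subst \<theta> u = concat (map \<theta> u)"

lemma word_subst_simps [simp]:
  "word_subst \<theta> [] = []" "word_subst \<theta> (x # u) = \<theta> x @ word_subst \<theta> u"
  "word_subst \<theta> (u @ v) = word_subst \<theta> u @ word_subst \<theta> v"
  by (simp_all add: word_subst_def)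

lemma pres_eq_subst:
  assumes inverse: "\<And>x. pres_eq R' (\<theta> x @ \<theta> (letter_inv x)) []"
    and rels: "\<And>u v. (u, v) \<in> R \<Longrightarrow> pres_eq R' (word_subst \<theta> u) (word_subst \<theta> v)"
    and "pres_eq R u v"
  shows "pres_eq R' (word_subst \<theta> u) (word_subst \<theta> v)"
  using assms(3)
proof (induction rule: pres_eq.induct)
  case (cancel x)
  show ?case using inverse[of x] by simp
next
  case (ctxt u v p q)
  then show ?case by (simp add: pres_eq.ctxt)
qed (auto intro: pres_eq.intros rels)

lemma pres_eq_subst_invw:
  assumes inverse: "\<And>x. pres_eq R' (\<theta> x @ \<theta> (letter_inv x)) []"
  shows "pres_eq R' (word_subst \<theta> (invw w) @ word_subst \<theta> w) []"
proof -
  have "pres_eq R' (word_subst \<theta> (invw w @ w)) (word_subst \<theta> [])"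
    by (rule pres_eq_subst[where R = "{}"]) (simp_all add: inverse pres_eq_inv_left)
  then show ?thesis by simp
qed

definition word_degree :: "('a \<times> bool \<Rightarrow> int) \<Rightarrow> 'a word \<Rightarrow> int" where
  "word_degree d u = sum_list (map d u)"

lemma word_degree_simps [simp]:
  "word_degree d [] = 0" "word_degree d (x # u) = d x + word_degree d u"
  "word_degree d (u @ v) = word_degree d u + word_degree d v"
  by (simp_all add: word_degree_def)

lemma word_degree_invw:
  "(\<And>x. d (letter_inv x) = - d x) \<Longrightarrow> word_degree d (invw u) = - word_degree d u"
  by (induction u) auto

lemma pres_eq_degree:
  assumes inverse: "\<And>x. d (letter_inv x) = - d x"
    and rels: "\<And>u v. (u, v) \<in> R \<Longrightarrow> word_degree d u = word_degree d v"
    and "pres_eq R u v"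
  shows "word_degree d u = word_degree d v"
  using assms(3) by (induction rule: pres_eq.induct) (auto simp: inverse rels)

definition word_pow :: "'a word \<Rightarrow> int \<Rightarrow> 'a word" where
  "word_pow w m = (if 0 \<le> m then concat (replicate (nat m) w)
                   else concat (replicate (nat (- m)) (invw w)))"

lemma concat_replicate_Suc': "concat (replicate (Suc k) u) = concat (replicate k u) @ u"
  by (induction k) auto

lemma word_pow_words: "w \<in> words_over S \<Longrightarrow> word_pow w m \<in> words_over S"
proof -
  have "u \<in> words_over S \<Longrightarrow> concat (replicate k u) \<in> words_over S" for u k
    by (induction k) auto
  then show "w \<in> words_over S \<Longrightarrow> word_pow w m \<in> words_over S"
    by (simp add: word_pow_def)
qed

lemma word_pow_succ: "pres_eq R (word_pow w m @ w) (word_pow w (m + 1))"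
proof (cases "0 \<le> m")
  case True
  then have "nat (m + 1) = Suc (nat m)" by simp
  then show ?thesis
    using True by (simp add: word_pow_def concat_replicate_Suc' pres_eq.refl del: replicate_Suc)
next
  case False
  define k where "k = nat (- m - 1)"
  have "nat (- m) = Suc k" using False by (simp add: k_def)
  then have "word_pow w m = concat (replicate k (invw w)) @ invw w"
    using False by (simp add: word_pow_def concat_replicate_Suc' del: replicate_Suc)
  moreover have "word_pow w (m + 1) = concat (replicate k (invw w))"
    using False by (auto simp: word_pow_def k_def)
  ultimately show ?thesis by (simp add: pres_eq_cancel_right')
qed

lemma word_pow_pred: "pres_eq R (word_pow w m @ invw w) (word_pow w (m - 1))"
proof -
  have "pres_eq R (word_pow w m @ invw w) ((word_pow w (m - 1) @ w) @ invw w)"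
    using pres_eq_append[OF pres_eq.sym[OF word_pow_succ[of R w "m - 1"]] pres_eq.refl] by simp
  also have "pres_eq R ((word_pow w (m - 1) @ w) @ invw w) (word_pow w (m - 1))"
    using pres_eq_cancel_right[of R "word_pow w (m - 1)" w] by simp
  finally show ?thesis .
qed

lemma word_pow_add: "pres_eq R (word_pow w a @ word_pow w b) (word_pow w (a + b))"
proof (induction b rule: int_induct[where k = 0])
  case base
  show ?case by (simp add: word_pow_def pres_eq.refl)
next
  case (step1 b)
  have "pres_eq R (word_pow w a @ word_pow w (b + 1)) (word_pow w a @ word_pow w b @ w)"
    by (rule pres_eq_append[OF pres_eq.refl pres_eq.sym[OF word_pow_succ]])
  also have "pres_eq R (word_pow w a @ word_pow w b @ w) (word_pow w (a + b) @ w)"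
    using pres_eq_right_mult[OF step1.IH, of w] by simp
  also have "pres_eq R (word_pow w (a + b) @ w) (word_pow w (a + (b + 1)))"
    using word_pow_succ[of R w "a + b"] by (simp add: add.assoc)
  finally show ?case .
next
  case (step2 b)
  have "pres_eq R (word_pow w a @ word_pow w (b - 1)) (word_pow w a @ word_pow w b @ invw w)"
    by (rule pres_eq_append[OF pres_eq.refl pres_eq.sym[OF word_pow_pred]])
  also have "pres_eq R (word_pow w a @ word_pow w b @ invw w) (word_pow w (a + b) @ invw w)"
    using pres_eq_right_mult[OF step2.IH, of "invw w"] by simp
  also have "pres_eq R (word_pow w (a + b) @ invw w) (word_pow w (a + (b - 1)))"
    using word_pow_pred[of R w "a + b"] by (simp add: algebra_simps)
  finally show ?case .
qed

lemma word_pow_commute: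
  assumes "pres_eq R (w @ y) (y @ w)"
  shows "pres_eq R (word_pow w m @ y) (y @ word_pow w m)"
proof -
  have rep: "pres_eq R (concat (replicate k u) @ y) (y @ concat (replicate k u))"
    if "pres_eq R (u @ y) (y @ u)" for u k
  proof (induction k)
    case 0
    show ?case by (simp add: pres_eq.refl)
  next
    case (Suc k)
    have "pres_eq R (u @ concat (replicate k u) @ y) (u @ y @ concat (replicate k u))"
      by (rule pres_eq_left_mult[OF Suc.IH])
    also have "pres_eq R (u @ y @ concat (replicate k u)) (y @ u @ concat (replicate k u))"
      using pres_eq_right_mult[OF that, of "concat (replicate k u)"] by simp
    finally show ?case by simp
  qed
  show ?thesis
    using rep[OF assms] rep[OF pres_eq_commute_inv[OF assms]] by (simp add: word_pow_def)
qed

lemma word_degree_word_pow: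
  assumes "\<And>x. d (letter_inv x) = - d x"
  shows "word_degree d (word_pow w m) = m * word_degree d w"
proof -
  have "word_degree d (concat (replicate k u)) = int k * word_degree d u" for k u
    by (induction k) (auto simp: algebra_simps)
  then show ?thesis by (simp add: word_pow_def word_degree_invw[where d = d, OF assms])
qed

lemma word_subst_word_pow_trivial:
  assumes inverse: "\<And>x. pres_eq R' (\<theta> x @ \<theta> (letter_inv x)) []"
    and trivial: "pres_eq R' (word_subst \<theta> w) []"
  shows "pres_eq R' (word_subst \<theta> (word_pow w m)) []"
proof -
  have rep: "pres_eq R' (word_subst \<theta> (concat (replicate k u))) []"
    if "pres_eq R' (word_subst \<theta> u) []" for u k
    by (induction k) (simp_all add: pres_eq.refl pres_eq_append[OF that, of _ "[]", simplified])
  have "pres_eq R' (word_subst \<theta> (invw w) @ []) (word_subst \<theta> (invw w) @ word_subst \<theta> w)"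
    by (rule pres_eq_append[OF pres_eq.refl pres_eq.sym[OF trivial]])
  also have "pres_eq R' (word_subst \<theta> (invw w) @ word_subst \<theta> w) []"
    by (rule pres_eq_subst_invw) (rule inverse)
  finally have "pres_eq R' (word_subst \<theta> (invw w)) []" by simp
  with trivial show ?thesis by (simp add: word_pow_def rep)
qed

lemma pres_eq_central_normal_form:
  assumes central: "\<And>v. v \<in> words_over S \<Longrightarrow> pres_eq R (z @ v) (v @ z)"
    and letter: "\<And>x. fst x \<in> S \<Longrightarrow> pres_eq R [x] (\<theta> x @ word_pow z (d x))"
    and \<theta>_words: "\<And>x. fst x \<in> S \<Longrightarrow> \<theta> x \<in> words_over S"
    and "u \<in> words_over S"
  shows "pres_eq R u (word_subst \<theta> u @ word_pow z (word_degree d u))"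
  using assms(4)
proof (induction u)
  case Nil
  show ?case by (simp add: word_pow_def pres_eq.refl)
next
  case (Cons x u)
  have u: "u \<in> words_over S" and x: "fst x \<in> S" using Cons.prems by auto
  have "word_subst \<theta> u \<in> words_over S"
    using u by (induction u) (auto simp: \<theta>_words)
  then have swap: "pres_eq R (word_pow z m @ word_subst \<theta> u) (word_subst \<theta> u @ word_pow z m)"
    for m by (rule word_pow_commute[OF central])
  let ?pu = "word_pow z (word_degree d u)"
  have "pres_eq R (x # u) (\<theta> x @ word_pow z (d x) @ word_subst \<theta> u @ ?pu)"
    using pres_eq_append[OF letter[OF x] Cons.IH[OF u]] by simp
  also have "pres_eq R (\<theta> x @ word_pow z (d x) @ word_subst \<theta> u @ ?pu)
                       (\<theta> x @ word_subst \<theta> u @ word_pow z (d x) @ ?pu)"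
    using pres_eq.ctxt[OF swap, where p = "\<theta> x" and q = ?pu] by simp
  also have "pres_eq R (\<theta> x @ word_subst \<theta> u @ word_pow z (d x) @ ?pu)
                       (\<theta> x @ word_subst \<theta> u @ word_pow z (d x + word_degree d u))"
    using pres_eq_left_mult[OF word_pow_add, where p = "\<theta> x @ word_subst \<theta> u"]
    by simp
  finally show ?case by simp
qed

section \<open>Eliminating the generator \<open>a\<^sub>1\<close>\<close>

lemma pos_word_simps [simp]:
  "pos_word [] = []" "pos_word (x # xs) = (x, True) # pos_word xs"
  "pos_word (xs @ ys) = pos_word xs @ pos_word ys"
  by (simp_all add: pos_word_def)

lemma words_over_pos_word [simp]: "pos_word xs \<in> words_over S \<longleftrightarrow> set xs \<subseteq> S"
  by (force simp: words_over_def pos_word_def)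

definition z_word :: "nat \<Rightarrow> nat word" where
  "z_word n = pos_word [1..<n+1]"

definition tail_word :: "nat \<Rightarrow> nat word" where
  "tail_word n = pos_word [2..<n+1]"

lemma z_word_Cons: "1 \<le> n \<Longrightarrow> z_word n = (1, True) # tail_word n"
  using upt_conv_Cons[of 1 "n+1"] by (simp add: z_word_def tail_word_def numeral_2_eq_2)

lemma z_word_words: "z_word n \<in> words_over {1..n}"
  by (auto simp: z_word_def)

text \<open>Since \<open>a\<^sub>1 = w\<inverse> z\<close>, the substitution \<open>a\<^sub>1 \<mapsto> w\<inverse>\<close> together with the exponent sum of \<open>a\<^sub>1\<close>
  will give the coordinates of an element of \<open>G\<^sub>n(H)\<close> in \<open>F \<times> \<int>\<close>.\<close>

definition elim_a1 :: "nat \<Rightarrow> nat \<times> bool \<Rightarrow> nat word" where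
  "elim_a1 n x = (if fst x = 1 then (if snd x then invw (tail_word n) else tail_word n) else [x])"

definition a1_exponent :: "nat \<times> bool \<Rightarrow> int" where
  "a1_exponent x = (if fst x = 1 then (if snd x then 1 else -1) else 0)"

lemma a1_exponent_inv: "a1_exponent (letter_inv x) = - a1_exponent x"
  by (simp add: a1_exponent_def letter_inv_def)

lemma elim_a1_inverse: "pres_eq R (elim_a1 n x @ elim_a1 n (letter_inv x)) []"
  using pres_eq_inv_left[of R "tail_word n"] pres_eq_inv_right[of R "tail_word n"]
    pres_eq.cancel[of R x]
  by (auto simp: elim_a1_def letter_inv_def)

lemma tail_word_words: "tail_word n \<in> words_over {2..n}"
  by (auto simp: tail_word_def)

lemma elim_a1_words: "fst x \<in> {1..n} \<Longrightarrow> elim_a1 n x \<in> words_over {2..n}"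
  using tail_word_words[of n] by (auto simp: elim_a1_def)

lemma word_subst_elim_a1_words: "u \<in> words_over {1..n} \<Longrightarrow> word_subst (elim_a1 n) u \<in> words_over {2..n}"
  by (induction u) (auto simp: elim_a1_words)

lemma word_subst_elim_a1_free: "u \<in> words_over {2..n} \<Longrightarrow> word_subst (elim_a1 n) u = u"
  by (induction u) (auto simp: elim_a1_def)

lemma word_degree_a1_free: "u \<in> words_over {2..n} \<Longrightarrow> word_degree a1_exponent u = 0"
  by (induction u) (auto simp: a1_exponent_def)

lemma word_subst_elim_a1_z:
  "1 \<le> n \<Longrightarrow> word_subst (elim_a1 n) (z_word n) = invw (tail_word n) @ tail_word n"
  using word_subst_elim_a1_free[OF tail_word_words] by (simp add: z_word_Cons elim_a1_def)

lemma word_degree_z: "1 \<le> n \<Longrightarrow> word_degree a1_exponent (z_word n) = 1"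
  using word_degree_a1_free[OF tail_word_words] by (simp add: z_word_Cons a1_exponent_def)

definition cyclic_shift :: "nat \<Rightarrow> nat \<Rightarrow> nat \<Rightarrow> nat" where
  "cyclic_shift n j i = (if 1 \<le> i \<and> i \<le> n then (if i + j \<le> n then i + j else i + j - n) else i)"

lemma cyclic_shift_Suc: "j < n \<Longrightarrow> cyclic_shift n (Suc j) = n_cycle n \<circ> cyclic_shift n j"
  by (auto simp: cyclic_shift_def n_cycle_def fun_eq_iff)

lemma cyclic_shift_map:
  "j \<le> n \<Longrightarrow> map (cyclic_shift n j) [1..<n+1] = [j+1..<n+1] @ [1..<j+1]"
  by (rule nth_equalityI) (auto simp: cyclic_shift_def nth_append)

definition G_rhs :: "nat \<Rightarrow> (nat \<Rightarrow> nat) \<Rightarrow> nat word" where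
  "G_rhs n \<sigma> = pos_word (map \<sigma> [1..<n+1])"

definition F_rhs :: "nat \<Rightarrow> (nat \<Rightarrow> nat) \<Rightarrow> nat word" where
  "F_rhs n \<tau> = pos_word (map \<tau> ([inv_into {1..n} \<tau> 1 + 1..<n+1] @ [1..<inv_into {1..n} \<tau> 1]))"

lemma G_rels_image: "G_rels n H = (\<lambda>\<sigma>. (z_word n, G_rhs n \<sigma>)) ` H"
  unfolding G_rels_def G_rhs_def z_word_def by blast

lemma F_rels_image: "F_rels n H = (\<lambda>\<tau>. (tail_word n, F_rhs n \<tau>)) ` H"
  unfolding F_rels_def F_rhs_def tail_word_def by blast

section \<open>The isomorphism \<open>G\<^sub>n(H) \<cong> F \<times> \<int>\<close>\<close>

text \<open>The setting of the theorem; \<open>n \<ge> 1\<close> is all the argument needs.\<close>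

locale cyclic_relations =
  fixes n :: nat and H :: "(nat \<Rightarrow> nat) set"
  assumes n_pos: "1 \<le> n"
    and sub: "subgroup H (sym_group n)"
    and cycle: "n_cycle n \<in> H"
begin

abbreviation "RG \<equiv> G_rels n H"
abbreviation "RF \<equiv> F_rels n H"
abbreviation "z \<equiv> z_word n"
abbreviation "w \<equiv> tail_word n"

lemma permutes_H: "\<tau> \<in> H \<Longrightarrow> \<tau> permutes {1..n}"
  using subgroup.subset[OF sub] by (auto simp: sym_group_def)

lemma cyclic_shift_in_H: "j \<le> n \<Longrightarrow> cyclic_shift n j \<in> H"
proof (induction j)
  case 0
  have "cyclic_shift n 0 = id" by (auto simp: cyclic_shift_def)
  then show ?case using subgroup.one_closed[OF sub] by (simp only: sym_group_def monoid.simps)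
next
  case (Suc j)
  have "cyclic_shift n (Suc j) = n_cycle n \<otimes>\<^bsub>sym_group n\<^esub> cyclic_shift n j"
    using Suc.prems by (simp add: cyclic_shift_Suc sym_group_def)
  then show ?case using subgroup.m_closed[OF sub cycle] Suc by simp
qed

text \<open>Since \<open>H\<close> contains the cyclic shifts, \<open>z\<close> equals all of its cyclic rotations in \<open>G\<^sub>n(H)\<close>.\<close>

lemma G_relation: "\<sigma> \<in> H \<Longrightarrow> pres_eq RG z (G_rhs n \<sigma>)"
  by (rule pres_eq.rel) (simp add: G_rels_image)

lemma F_relation: "\<tau> \<in> H \<Longrightarrow> pres_eq RF w (F_rhs n \<tau>)"
  by (rule pres_eq.rel) (simp add: F_rels_image)

lemma z_rotation:
  assumes "j \<le> n"
  shows "pres_eq RG z (pos_word ([j+1..<n+1] @ [1..<j+1]))"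
  using G_relation[OF cyclic_shift_in_H[OF assms]]
  unfolding G_rhs_def cyclic_shift_map[OF assms] .

text \<open>Consequently \<open>z\<close> is central: \<open>z = a\<^sub>i M L = M L a\<^sub>i\<close> for \<open>L = a\<^sub>1 \<cdots> a\<^sub>i\<^sub>-\<^sub>1\<close>, \<open>M = a\<^sub>i\<^sub>+\<^sub>1 \<cdots> a\<^sub>n\<close>.\<close>

lemma z_commutes_generator:
  assumes i: "i \<in> {1..n}"
  shows "pres_eq RG (z @ [(i, True)]) ([(i, True)] @ z)"
proof -
  define L where "L = pos_word [1..<i]"
  define M where "M = pos_word [i+1..<n+1]"
  have shift: "i - 1 + 1 = i" and from_i: "[i..<n+1] = i # [i+1..<n+1]"
      and to_i: "[1..<i+1] = [1..<i] @ [i]"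
    using i by (simp_all add: upt_conv_Cons)
  have "pres_eq RG z (pos_word ([i - 1 + 1..<n+1] @ [1..<i - 1 + 1]))"
    using i by (intro z_rotation) auto
  then have first: "pres_eq RG z ((i, True) # M @ L)"
    unfolding shift from_i L_def M_def by (simp only: pos_word_simps append_Cons)
  have "pres_eq RG z (pos_word ([i+1..<n+1] @ [1..<i+1]))"
    using i by (intro z_rotation) simp
  then have last: "pres_eq RG z (M @ L @ [(i, True)])"
    unfolding to_i L_def M_def by (simp only: pos_word_simps append_assoc)
  have "pres_eq RG (z @ [(i, True)]) ((i, True) # M @ L @ [(i, True)])"
    using pres_eq_right_mult[OF first, of "[(i, True)]"] by simp
  also have "pres_eq RG ((i, True) # M @ L @ [(i, True)]) ([(i, True)] @ z)"
    using pres_eq_left_mult[OF pres_eq.sym[OF last], of "[(i, True)]"] by simp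
  finally show ?thesis .
qed

lemma z_commutes_letter:
  assumes "fst x \<in> {1..n}"
  shows "pres_eq RG (z @ [x]) ([x] @ z)"
proof (cases x)
  case (Pair i b)
  have pos: "pres_eq RG (z @ [(i, True)]) ([(i, True)] @ z)"
    using assms Pair by (intro z_commutes_generator) auto
  show ?thesis
  proof (cases b)
    case True
    then show ?thesis using pos Pair by simp
  next
    case False
    have "pres_eq RG (invw [(i, True)] @ z) (z @ invw [(i, True)])"
      by (rule pres_eq_commute_inv[OF pres_eq.sym[OF pos]])
    from pres_eq.sym[OF this] show ?thesis using False Pair by (simp add: letter_inv_def)
  qed
qed

lemma z_central: "v \<in> words_over {1..n} \<Longrightarrow> pres_eq RG (z @ v) (v @ z)"
proof (induction v)
  case Nil
  show ?case by (simp add: pres_eq.refl)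
next
  case (Cons x v)
  then show ?case
    using pres_eq_commute_append[OF z_commutes_letter Cons.IH, of x] by simp
qed

lemma relation_split:
  assumes "\<tau> \<in> H"
  obtains P S where "G_rhs n \<tau> = P @ [(1, True)] @ S" and "F_rhs n \<tau> = S @ P"
    and "P \<in> words_over {2..n}" and "S \<in> words_over {2..n}"
proof -
  have bij: "bij_betw \<tau> {1..n} {1..n}" by (rule permutes_imp_bij[OF permutes_H[OF assms]])
  define k where "k = inv_into {1..n} \<tau> 1"
  have one: "1 \<in> \<tau> ` {1..n}" using bij_betw_imp_surj_on[OF bij] n_pos by simp
  have k: "k \<in> {1..n}" unfolding k_def by (rule inv_into_into[OF one])
  have \<tau>k: "\<tau> k = 1" unfolding k_def by (rule f_inv_into_f[OF one])
  have others: "\<tau> j \<in> {2..n}" if "j \<in> {1..n}" "j \<noteq> k" for j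
  proof -
    have "\<tau> j \<in> {1..n}" using bij_betwE[OF bij] that(1) by blast
    moreover have "\<tau> j \<noteq> 1"
      using inj_onD[OF bij_betw_imp_inj_on[OF bij]] that k \<tau>k by metis
    ultimately show ?thesis by auto
  qed
  have split: "[1..<n+1] = [1..<k] @ k # [k+1..<n+1]"
    using k upt_add_eq_append[of 1 k "n+1-k"] by (simp add: upt_conv_Cons)
  show ?thesis
  proof (rule that)
    show "G_rhs n \<tau> = pos_word (map \<tau> [1..<k]) @ [(1, True)] @ pos_word (map \<tau> [k+1..<n+1])"
      unfolding G_rhs_def split using \<tau>k by simp
    show "F_rhs n \<tau> = pos_word (map \<tau> [k+1..<n+1]) @ pos_word (map \<tau> [1..<k])"
      unfolding F_rhs_def k_def by simp
    show "pos_word (map \<tau> [1..<k]) \<in> words_over {2..n}"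
      and "pos_word (map \<tau> [k+1..<n+1]) \<in> words_over {2..n}"
      using others k by auto
  qed
qed

text \<open>The relations of \<open>F\<close> hold in \<open>G\<^sub>n(H)\<close>: rotating \<open>z = P a\<^sub>1 S\<close> by the central \<open>z\<close> gives
  \<open>a\<^sub>1 w = z = a\<^sub>1 S P\<close>.\<close>

lemma F_relations_hold_in_G:
  assumes "(u, v) \<in> RF"
  shows "pres_eq RG u v"
proof -
  from assms obtain \<tau> where \<tau>: "\<tau> \<in> H" and u: "u = w" and v: "v = F_rhs n \<tau>"
    by (auto simp: F_rels_image)
  obtain P S where split: "G_rhs n \<tau> = P @ [(1, True)] @ S" and SP: "F_rhs n \<tau> = S @ P"
    and P: "P \<in> words_over {2..n}"
    by (rule relation_split[OF \<tau>])
  have "P \<in> words_over {1..n}"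
    by (rule words_over_mono[OF P]) auto
  then have central: "pres_eq RG (z @ P) (P @ z)"
    by (rule z_central)
  have "pres_eq RG z (P @ [(1, True)] @ S)"
    using G_relation[OF \<tau>] unfolding split .
  then have "pres_eq RG z (([(1, True)] @ S) @ P)"
    by (rule pres_eq_rotate_central[OF _ central])
  then have "pres_eq RG ([(1, True)] @ w) ([(1, True)] @ S @ P)"
    using z_word_Cons[OF n_pos] by simp
  then show ?thesis
    unfolding u v SP by (rule pres_eq_cancel_prefix)
qed

text \<open>Conversely the elimination of \<open>a\<^sub>1\<close> maps the relations of \<open>G\<^sub>n(H)\<close> to consequences of
  the relations of \<open>F\<close>: both sides of \<open>z = P a\<^sub>1 S\<close> become trivial, using \<open>w = S P\<close>.\<close>

lemma elim_a1_relations: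
  assumes "(u, v) \<in> RG"
  shows "pres_eq RF (word_subst (elim_a1 n) u) (word_subst (elim_a1 n) v)"
proof -
  from assms obtain \<sigma> where \<sigma>: "\<sigma> \<in> H" and u: "u = z" and v: "v = G_rhs n \<sigma>"
    by (auto simp: G_rels_image)
  obtain P S where split: "G_rhs n \<sigma> = P @ [(1, True)] @ S" and SP: "F_rhs n \<sigma> = S @ P"
    and P: "P \<in> words_over {2..n}" and S: "S \<in> words_over {2..n}"
    by (rule relation_split[OF \<sigma>])
  have "pres_eq RF (invw w @ S @ P) (invw w @ w)"
    using pres_eq_left_mult[OF pres_eq.sym[OF F_relation[OF \<sigma>]], of "invw w"]
    unfolding SP .
  then have "pres_eq RF (invw w @ S @ P) []"
    by (rule pres_eq_trans[OF _ pres_eq_inv_left])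
  then have "pres_eq RF (P @ invw w @ S) []"
    using pres_eq_trivial_rotate[of RF "invw w @ S" P] by simp
  then have v_trivial: "pres_eq RF (word_subst (elim_a1 n) v) []"
    by (simp add: v split word_subst_elim_a1_free[OF P] word_subst_elim_a1_free[OF S] elim_a1_def)
  have "pres_eq RF (word_subst (elim_a1 n) u) []"
    using n_pos by (simp add: u word_subst_elim_a1_z pres_eq_inv_left)
  then show ?thesis by (rule pres_eq_trans[OF _ pres_eq.sym[OF v_trivial]])
qed

lemma a1_exponent_relations:
  assumes "(u, v) \<in> RG"
  shows "word_degree a1_exponent u = word_degree a1_exponent v"
proof -
  from assms obtain \<sigma> where \<sigma>: "\<sigma> \<in> H" and u: "u = z" and v: "v = G_rhs n \<sigma>"
    by (auto simp: G_rels_image)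
  obtain P S where split: "G_rhs n \<sigma> = P @ [(1, True)] @ S" and "F_rhs n \<sigma> = S @ P"
    and P: "P \<in> words_over {2..n}" and S: "S \<in> words_over {2..n}"
    by (rule relation_split[OF \<sigma>])
  show ?thesis
    using n_pos by (simp add: u v split word_degree_z word_degree_a1_free[OF P]
        word_degree_a1_free[OF S] a1_exponent_def)
qed

text \<open>In \<open>G\<^sub>n(H)\<close>, each letter \<open>x\<close> equals \<open>\<theta>(x) z\<^sup>e\<^sup>(\<^sup>x\<^sup>)\<close>: \<open>a\<^sub>1 = w\<inverse> z\<close> because \<open>z = w a\<^sub>1\<close>.\<close>

lemma letter_normal_form:
  assumes "fst x \<in> {1..n}"
  shows "pres_eq RG [x] (elim_a1 n x @ word_pow z (a1_exponent x))"
proof -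
  have z_w: "z = (1, True) # w" by (rule z_word_Cons[OF n_pos])
  have "pres_eq RG z (w @ [(1, True)])"
    using z_rotation[of 1] n_pos by (simp add: tail_word_def numeral_2_eq_2)
  then have "pres_eq RG (invw w @ z) (invw w @ w @ [(1, True)])"
    by (rule pres_eq_left_mult)
  then have a1: "pres_eq RG [(1, True)] (invw w @ z)"
    by (rule pres_eq.sym[OF pres_eq_trans[OF _ pres_eq_cancel_left]])
  have a1_inv: "pres_eq RG [(1, False)] (w @ invw z)"
    using pres_eq.sym[OF pres_eq_cancel_left'[of RG w "[(1, False)]"]] z_w
    by (simp add: letter_inv_def)
  show ?thesis
  proof (cases "fst x = 1")
    case True
    then show ?thesis
      using a1 a1_inv by (cases x; cases "snd x") (simp_all add: elim_a1_def a1_exponent_def word_pow_def)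
  next
    case False
    then show ?thesis by (simp add: elim_a1_def a1_exponent_def word_pow_def pres_eq.refl)
  qed
qed

lemma G_normal_form:
  assumes "u \<in> words_over {1..n}"
  shows "pres_eq RG u (word_subst (elim_a1 n) u @ word_pow z (word_degree a1_exponent u))"
proof (rule pres_eq_central_normal_form[OF z_central letter_normal_form _ assms])
  fix x :: "nat \<times> bool" assume "fst x \<in> {1..n}"
  then show "elim_a1 n x \<in> words_over {1..n}"
    by (rule words_over_mono[OF elim_a1_words]) auto
qed

end

definition G_coords :: "nat \<Rightarrow> (nat \<Rightarrow> nat) set \<Rightarrow> nat word \<Rightarrow> nat word set \<times> int" where
  "G_coords n H u = (pres_class {2..n} (F_rels n H) (word_subst (elim_a1 n) u),
                     word_degree a1_exponent u)"

context cyclic_relations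
begin

text \<open>The four hypotheses of the isomorphism criterion \<open>presented_group_iso\<close>.\<close>

lemma G_coords_respects:
  assumes "pres_eq RG u v"
  shows "G_coords n H u = G_coords n H v"
proof -
  have "pres_eq RF (word_subst (elim_a1 n) u) (word_subst (elim_a1 n) v)"
    by (rule pres_eq_subst[OF elim_a1_inverse elim_a1_relations assms])
  then have "pres_class {2..n} RF (word_subst (elim_a1 n) u)
               = pres_class {2..n} RF (word_subst (elim_a1 n) v)"
    by (rule pres_class_eq)
  moreover have "word_degree a1_exponent u = word_degree a1_exponent v"
    by (rule pres_eq_degree[OF a1_exponent_inv a1_exponent_relations assms])
  ultimately show ?thesis by (simp add: G_coords_def)
qed

lemma G_coords_faithful:
  assumes u: "u \<in> words_over {1..n}" and v: "v \<in> words_over {1..n}"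
    and eq: "G_coords n H u = G_coords n H v"
  shows "pres_eq RG u v"
proof -
  let ?\<theta> = "word_subst (elim_a1 n)" and ?e = "word_degree a1_exponent"
  have cls: "pres_class {2..n} RF (?\<theta> u) = pres_class {2..n} RF (?\<theta> v)" and e: "?e u = ?e v"
    using eq by (simp_all add: G_coords_def)
  have \<theta>F: "pres_eq RF (?\<theta> u) (?\<theta> v)"
    by (rule pres_class_eqD[OF word_subst_elim_a1_words[OF v] cls])
  have \<theta>: "pres_eq RG (?\<theta> u) (?\<theta> v)"
    using pres_eq_mono_rels[OF \<theta>F F_relations_hold_in_G] .
  have "pres_eq RG u (?\<theta> u @ word_pow z (?e u))" by (rule G_normal_form[OF u])
  also have "pres_eq RG (?\<theta> u @ word_pow z (?e u)) (?\<theta> v @ word_pow z (?e v))"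
    unfolding e by (rule pres_eq_right_mult[OF \<theta>])
  also have "pres_eq RG (?\<theta> v @ word_pow z (?e v)) v"
    by (rule pres_eq.sym[OF G_normal_form[OF v]])
  finally show ?thesis .
qed

lemma G_coords_onto:
  "G_coords n H ` words_over {1..n} = carrier (F_n n H \<times>\<times> integer_group)"
proof
  show "G_coords n H ` words_over {1..n} \<subseteq> carrier (F_n n H \<times>\<times> integer_group)"
  proof (rule image_subsetI)
    fix u assume "u \<in> words_over {1..n}"
    then have "pres_class {2..n} RF (word_subst (elim_a1 n) u) \<in> carrier (F_n n H)"
      unfolding F_n_def carrier_presented_group by (intro imageI word_subst_elim_a1_words)
    then show "G_coords n H u \<in> carrier (F_n n H \<times>\<times> integer_group)"
      by (simp add: G_coords_def integer_group_def)
  qed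
next
  show "carrier (F_n n H \<times>\<times> integer_group) \<subseteq> G_coords n H ` words_over {1..n}"
  proof
    fix y assume "y \<in> carrier (F_n n H \<times>\<times> integer_group)"
    then obtain A m where y: "y = (A, m)" and "A \<in> carrier (F_n n H)"
      by (cases y) simp
    then obtain v where A: "A = pres_class {2..n} RF v" and v: "v \<in> words_over {2..n}"
      unfolding F_n_def carrier_presented_group by blast
    have "pres_eq RF (word_subst (elim_a1 n) z) []"
      using n_pos by (simp add: word_subst_elim_a1_z pres_eq_inv_left)
    then have "pres_eq RF (word_subst (elim_a1 n) (word_pow z m)) []"
      by (rule word_subst_word_pow_trivial[where \<theta> = "elim_a1 n", OF elim_a1_inverse])
    then have "pres_eq RF (v @ word_subst (elim_a1 n) (word_pow z m)) (v @ [])"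
      by (rule pres_eq_left_mult)
    then have "pres_class {2..n} RF (word_subst (elim_a1 n) (v @ word_pow z m)) = A"
      unfolding A by (intro pres_class_eq) (simp add: word_subst_elim_a1_free[OF v])
    moreover have "word_degree a1_exponent (v @ word_pow z m) = m"
      using n_pos by (simp add: word_degree_a1_free[OF v] word_degree_z
          word_degree_word_pow[where d = a1_exponent, OF a1_exponent_inv])
    ultimately have "G_coords n H (v @ word_pow z m) = y"
      by (simp add: G_coords_def y)
    moreover have "v @ word_pow z m \<in> words_over {1..n}"
      using words_over_mono[OF v] word_pow_words[OF z_word_words] by auto
    ultimately show "y \<in> G_coords n H ` words_over {1..n}" by blast
  qed
qed

lemma G_coords_iso:
  "induced_map (G_coords n H) \<in> iso (G_n n H) (F_n n H \<times>\<times> integer_group)"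
  unfolding G_n_def
proof (rule presented_group_iso[OF G_coords_respects G_coords_faithful _ G_coords_onto])
  fix u v assume "u \<in> words_over {1..n}" "v \<in> words_over {1..n}"
  then show "G_coords n H (u @ v) = G_coords n H u \<otimes>\<^bsub>F_n n H \<times>\<times> integer_group\<^esub> G_coords n H v"
    by (simp add: G_coords_def F_n_def DirProd_def integer_group_def
        presented_group_mult_class word_subst_elim_a1_words)
qed

lemma G_coords_z: "induced_map (G_coords n H) (pres_class {1..n} RG z) = (\<one>\<^bsub>F_n n H\<^esub>, 1)"
proof -
  have "pres_class {2..n} RF (word_subst (elim_a1 n) z) = pres_class {2..n} RF []"
    using n_pos by (intro pres_class_eq) (simp add: word_subst_elim_a1_z pres_eq_inv_left)
  then have "G_coords n H z = (\<one>\<^bsub>F_n n H\<^esub>, 1)"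
    using n_pos by (simp add: G_coords_def word_degree_z F_n_def presented_group_def)
  then show ?thesis
    by (simp only: induced_map_class[OF G_coords_respects z_word_words])
qed

end

theorem mainTheorem10:
  fixes n :: nat and H :: "(nat \<Rightarrow> nat) set"
  assumes "n \<ge> 3"
    and "subgroup H (sym_group n)"
    and "generate (sym_group n) {n_cycle n} \<subseteq> H"
  shows "\<exists>\<phi>. \<phi> \<in> iso (G_n n H) (F_n n H \<times>\<times> integer_group)
             \<and> \<phi> (pres_class {1..n} (G_rels n H) (pos_word [1..<n+1]))
                 = (\<one>\<^bsub>F_n n H\<^esub>, 1)"
proof -
  have "n_cycle n \<in> H"
    using assms(3) generate.incl[of "n_cycle n" "{n_cycle n}" "sym_group n"] by auto
  with assms(1,2) interpret cyclic_relations n H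
    by (simp add: cyclic_relations_def)
  show ?thesis
    using G_coords_iso G_coords_z unfolding z_word_def by blast
qed

end
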